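(* Let $n\ge2$, $0<\varepsilon<1$ and $s\ge\lambda\ge1$. Let $G$ be an $n$-vertex $(\varepsilon,s)$-expander and let $U\subseteq V(G)$ with $|U|\le 2n/3$. Then there is a set $U'\subseteq U$ with $|N_G(U')|\ge\lambda|U'|$ and $|U'|\ge\frac{\varepsilon|U|}{3\lambda(\log n)^2}$.
   Context: Logarithms are base 2. For $U\subseteq V(G)$, $N_G(U)$ is the set of vertices outside $U$ with a neighbour in $U$; $G-F$ is $G$ with edge set $F$ deleted. An $n$-vertex graph $G$ is an $(\varepsilon,s)$-expander if for every $U\subseteq V(G)$, $F\subseteq E(G)$ with $1\le|U|\le\frac23n$ and $|F|\le s|U|$ we have $|N_{G-F}(U)|\ge\varepsilon|U|/(\log n)^2$. *)

theory Defs
  imports Complex_Main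
begin

definition simple_graph :: "'a set \<Rightarrow> 'a set set \<Rightarrow> bool" where
  "simple_graph V E \<longleftrightarrow> finite V \<and> (\<forall>e\<in>E. e \<subseteq> V \<and> card e = 2)"

definition nbhd :: "'a set \<Rightarrow> 'a set set \<Rightarrow> 'a set \<Rightarrow> 'a set" where
  "nbhd V E U = {v \<in> V - U. \<exists>u\<in>U. {u, v} \<in> E}"

definition expander :: "real \<Rightarrow> real \<Rightarrow> 'a set \<Rightarrow> 'a set set \<Rightarrow> bool" where
  "expander eps s V E \<longleftrightarrow>
     (\<forall>U F. U \<subseteq> V \<longrightarrow> F \<subseteq> E \<longrightarrow> 1 \<le> card U \<longrightarrow>
        real (card U) \<le> 2/3 * real (card V) \<longrightarrow> real (card F) \<le> s * real (card U) \<longrightarrow>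
        real (card (nbhd V (E - F) U)) \<ge> eps * real (card U) / (log 2 (real (card V)))\<^sup>2)"

end

theory Submission
  imports Defs
begin

text \<open>Choose Z \<subseteq> U of maximum size whose neighbours outside U number at least
  \<lambda>|Z|. If Z is large we are done. Otherwise, by maximality, every u \<in> U - Z has fewer
  than \<lambda> neighbours outside U that are not already neighbours of Z; deleting these at
  most \<lambda>|U| \<le> s|U| edges leaves U with no neighbours outside N(Z) - U, so the expansion
  property gives \<epsilon>|U|/(log n)^2 \<le> |N(Z) - U| < \<lambda>(|Z| + 1) \<le> 2\<lambda>|Z|,
  contradicting the smallness of Z.\<close>

lemma card_nbhd_diff_insert:
  assumes "finite V" and "insert u Z \<subseteq> U"
  shows "card (nbhd V E (insert u Z) - U)
           = card (nbhd V E Z - U) + card (nbhd V E {u} - U - nbhd V E Z)"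
proof -
  have "finite (nbhd V E W)" for W
    using assms(1) unfolding nbhd_def by auto
  moreover have "nbhd V E (insert u Z) - U = (nbhd V E Z - U) \<union> (nbhd V E {u} - U - nbhd V E Z)"
    using assms(2) unfolding nbhd_def by auto
  ultimately show ?thesis
    by (simp add: card_Un_disjoint[of "nbhd V E Z - U"] Diff_Int_distrib2)
qed

lemma exists_maximum_expanding_subset:
  fixes lambda :: real
  assumes "finite U"
  obtains Z where "Z \<subseteq> U" and "lambda * card Z \<le> card (nbhd V E Z - U)"
    and "\<And>u. u \<in> U - Z \<Longrightarrow> card (nbhd V E (insert u Z) - U) < lambda * (card Z + 1)"
proof -
  define expanding where
    "expanding Z \<longleftrightarrow> Z \<subseteq> U \<and> lambda * card Z \<le> card (nbhd V E Z - U)" for Z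
  have "expanding {}"
    unfolding expanding_def nbhd_def by simp
  moreover have "\<forall>Z. expanding Z \<longrightarrow> card Z < Suc (card U)"
    using assms by (simp add: expanding_def card_mono le_imp_less_Suc)
  ultimately obtain Z where Z: "expanding Z" and Z_max: "\<And>W. expanding W \<Longrightarrow> card W \<le> card Z"
    using Lattices_Big.ex_has_greatest_nat[of expanding "{}" card "Suc (card U)"] by auto
  have "card (nbhd V E (insert u Z) - U) < lambda * (card Z + 1)" if "u \<in> U - Z" for u
  proof -
    have "card (insert u Z) = card Z + 1"
      using that Z assms finite_subset unfolding expanding_def by (metis Diff_iff card_insert_disjoint Suc_eq_plus1)
    then have "\<not> expanding (insert u Z)"
      using Z_max[of "insert u Z"] by linarith
    with that Z \<open>card (insert u Z) = card Z + 1\<close> show ?thesis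
      unfolding expanding_def by auto
  qed
  with Z that show thesis
    unfolding expanding_def by blast
qed

lemma delete_edges_to_new_neighbours:
  fixes c :: real
  assumes "finite V" and "finite U" and "Z \<subseteq> U"
    and new: "\<And>u. u \<in> U - Z \<Longrightarrow> card (nbhd V E {u} - U - nbhd V E Z) \<le> c"
  obtains F where "F \<subseteq> E" and "card F \<le> c * card (U - Z)"
    and "nbhd V (E - F) U \<subseteq> nbhd V E Z - U"
proof
  define F where "F = (\<Union>u\<in>U - Z. (\<lambda>v. {u, v}) ` (nbhd V E {u} - U - nbhd V E Z))"
  show "F \<subseteq> E"
    unfolding F_def nbhd_def by auto
  have fin_nbhd: "finite (nbhd V E W)" for W
    using assms(1) unfolding nbhd_def by auto
  have "card F \<le> (\<Sum>u\<in>U - Z. card ((\<lambda>v. {u, v}) ` (nbhd V E {u} - U - nbhd V E Z)))"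
    unfolding F_def using assms(2) by (intro card_UN_le) auto
  also have "\<dots> \<le> (\<Sum>u\<in>U - Z. card (nbhd V E {u} - U - nbhd V E Z))"
    by (intro sum_mono card_image_le) (simp add: fin_nbhd)
  finally have "real (card F) \<le> (\<Sum>u\<in>U - Z. real (card (nbhd V E {u} - U - nbhd V E Z)))"
    by (metis of_nat_le_iff of_nat_sum)
  also have "\<dots> \<le> (\<Sum>u\<in>U - Z. c)"
    by (intro sum_mono new)
  finally show "card F \<le> c * card (U - Z)"
    by (simp add: mult.commute)
  show "nbhd V (E - F) U \<subseteq> nbhd V E Z - U"
    using assms(3) unfolding F_def nbhd_def by auto
qed

lemma expander_nbhd_of_maximum_expanding_subset:
  fixes eps s lambda :: real
  assumes "expander eps s V E" and "finite V" and "U \<subseteq> V" and "U \<noteq> {}"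
    and "card U \<le> 2/3 * card V" and "0 \<le> lambda" and "lambda \<le> s"
    and "Z \<subseteq> U" and "lambda * card Z \<le> card (nbhd V E Z - U)"
    and "\<And>u. u \<in> U - Z \<Longrightarrow> card (nbhd V E (insert u Z) - U) < lambda * (card Z + 1)"
  shows "eps * card U / (log 2 (card V))\<^sup>2 \<le> card (nbhd V E Z - U)"
proof -
  have "finite U"
    using assms(2,3) finite_subset by blast
  have "card (nbhd V E {u} - U - nbhd V E Z) \<le> lambda" if "u \<in> U - Z" for u
    using assms(9) assms(10)[OF that] card_nbhd_diff_insert[OF assms(2), of u Z U] that assms(8)
    by (simp add: algebra_simps)
  then obtain F where "F \<subseteq> E" and F_card: "card F \<le> lambda * card (U - Z)"
    and F_nbhd: "nbhd V (E - F) U \<subseteq> nbhd V E Z - U"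
    using delete_edges_to_new_neighbours[OF assms(2) \<open>finite U\<close> assms(8)] by blast
  have "lambda * card (U - Z) \<le> s * card U"
    using assms(6,7) \<open>finite U\<close> by (intro mult_mono) (auto intro: card_mono)
  moreover have "1 \<le> card U"
    using assms(4) \<open>finite U\<close> by (simp add: Suc_le_eq card_gt_0_iff)
  ultimately have "eps * card U / (log 2 (card V))\<^sup>2 \<le> card (nbhd V (E - F) U)"
    using assms(1,3,5) \<open>F \<subseteq> E\<close> F_card unfolding expander_def by auto
  also have "\<dots> \<le> card (nbhd V E Z - U)"
    using F_nbhd assms(2) by (simp add: card_mono nbhd_def)
  finally show ?thesis .
qed

lemma maximum_expanding_subset_large:
  fixes eps s lambda :: real
  assumes "expander eps s V E" and "finite V" and "2 \<le> card V" and "U \<subseteq> V"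
    and "card U \<le> 2/3 * card V" and "eps < 1" and "1 \<le> lambda" and "lambda \<le> s"
    and Z: "Z \<subseteq> U" "lambda * card Z \<le> card (nbhd V E Z - U)"
    and Z_max: "\<And>u. u \<in> U - Z \<Longrightarrow> card (nbhd V E (insert u Z) - U) < lambda * (card Z + 1)"
  shows "eps * card U / (3 * lambda * (log 2 (card V))\<^sup>2) \<le> card Z"
proof (rule ccontr)
  define t where "t = eps * card U / (3 * lambda * (log 2 (card V))\<^sup>2)"
  assume "\<not> ?thesis"
  then have small: "card Z < t"
    unfolding t_def by simp
  then have t_pos: "0 < t"
    by linarith
  then have "U \<noteq> {}"
    unfolding t_def by auto
  have log_sq: "1 \<le> (log 2 (card V))\<^sup>2"
    using assms(3) by (simp add: one_le_power)
  have lambda_log_sq: "1 \<le> lambda * (log 2 (card V))\<^sup>2"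
    using assms(7) log_sq mult_mono[of 1 lambda 1 "(log 2 (card V))\<^sup>2"] by simp
  then have "eps * card U \<le> 3 * lambda * (log 2 (card V))\<^sup>2 * card U"
    using assms(6) by (intro mult_right_mono) auto
  then have "t \<le> card U"
    using lambda_log_sq unfolding t_def by (subst pos_divide_le_eq) (auto simp: algebra_simps)
  have lower: "3 * lambda * t \<le> card (nbhd V E Z - U)"
    using expander_nbhd_of_maximum_expanding_subset[OF assms(1,2,4) \<open>U \<noteq> {}\<close> assms(5) _ assms(8) Z Z_max]
      assms(7) log_sq by (simp add: t_def)
  have upper: "card (nbhd V E Z - U) < lambda * (card Z + 1)"
  proof -
    have "Z \<noteq> U"
      using small \<open>t \<le> card U\<close> by auto
    then obtain u where "u \<in> U - Z"
      using Z(1) by blast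
    then show ?thesis
      using Z_max card_nbhd_diff_insert[OF assms(2), of u Z U] Z(1) by force
  qed
  have "Z \<noteq> {}"
    using lower mult_pos_pos[OF _ t_pos, of lambda] assms(7) by (auto simp: nbhd_def)
  then have "1 \<le> card Z"
    using Z(1) assms(2,4) by (meson card_0_eq finite_subset less_one not_le)
  then have "real (card Z + 1) \<le> 2 * t"
    using small by simp
  then have "lambda * (card Z + 1) \<le> lambda * (2 * t)"
    using assms(7) by (intro mult_left_mono) auto
  with lower upper have "3 * (lambda * t) < 2 * (lambda * t)"
    by (simp add: mult_ac)
  with mult_pos_pos[OF _ t_pos, of lambda] assms(7) show False
    by linarith
qed

theorem mainTheorem15:
  fixes V :: "'a set" and E :: "'a set set" and U :: "'a set"
    and n :: nat and eps s lambda :: real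
  assumes "simple_graph V E"
    and "n = card V"
    and "n \<ge> 2"
    and "0 < eps" and "eps < 1"
    and "s \<ge> lambda" and "lambda \<ge> 1"
    and "expander eps s V E"
    and "U \<subseteq> V"
    and "real (card U) \<le> 2 * real n / 3"
  shows "\<exists>U'. U' \<subseteq> U \<and> real (card (nbhd V E U')) \<ge> lambda * real (card U') \<and>
           real (card U') \<ge> eps * real (card U) / (3 * lambda * (log 2 (real n))\<^sup>2)"
proof -
  have "finite V"
    using assms(1) unfolding simple_graph_def by blast
  then have "finite U"
    using assms(9) finite_subset by blast
  obtain Z where Z: "Z \<subseteq> U" "lambda * card Z \<le> card (nbhd V E Z - U)"
    and Z_max: "\<And>u. u \<in> U - Z \<Longrightarrow> card (nbhd V E (insert u Z) - U) < lambda * (card Z + 1)"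
    using exists_maximum_expanding_subset[OF \<open>finite U\<close>] by blast
  have "card (nbhd V E Z - U) \<le> card (nbhd V E Z)"
    using \<open>finite V\<close> by (simp add: card_mono nbhd_def)
  moreover have "eps * card U / (3 * lambda * (log 2 n)\<^sup>2) \<le> card Z"
    using maximum_expanding_subset_large[OF assms(8) \<open>finite V\<close> _ assms(9) _ assms(5,7,6) Z Z_max]
      assms(2,3,10) by simp
  ultimately show ?thesis
    using Z by (intro exI[of _ Z]) auto
qed

end
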